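(* Let $A\in\mathbb{R}^{m\times n}$ have no zero row, with rows $a_1^T,\dots,a_m^T$, let $\mu_1,\dots,\mu_m\in\mathbb{R}$ be arbitrary, ${\bf u}=(\mu_1,\dots,\mu_m)$, and $h_{k,l}=a_k^Ta_l/\|a_l\|_2^2$. For $1\le i<j\le m$ let $$d_{i,j}({\bf u}_i)=\sum_{v=2}^{j-i+1}(-1)^{v-1}\sum_{i=t_1<t_2<\dots<t_v=j}\ \prod_{s=1}^{v-1}\mu_{t_{s+1}}\prod_{s=1}^{v-1}h_{t_s,t_{s+1}},$$ and let $\Omega({\bf u})\in\mathbb{R}^{m\times m}$ be the unit upper triangular matrix with $(i,j)$ entry $d_{i,j}({\bf u}_i)$ for $j>i$. For $j\neq i$ and $c\in\mathbb{R}$ let $E(j,i(c))=I_m+c\,e_je_i^T$ (the identity with entry $c$ at position $(j,i)$). Define $H_1(\mu_1)=I_m$ and $H_i(\mu_i)=\prod_{j=1}^{i-1}E\big(j,i(-\mu_ih_{j,i})\big)$ for $1<i\le m$. Then $$\Omega({\bf u})=H_1(\mu_1)H_2(\mu_2)\cdots H_m(\mu_m).$$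
   Context: $e_k$ denotes the $k$-th standard basis vector of $\mathbb{R}^m$ and $I_m$ the $m\times m$ identity. *)

theory Defs
  imports "Jordan_Normal_Form.Matrix"
begin

text \<open>Indices are 0-based: paper index k (1..m) corresponds to k-1 here.
  Rows of A are row A k, k < dim_row A.\<close>

definition hcoef :: "real mat \<Rightarrow> nat \<Rightarrow> nat \<Rightarrow> real" where
  "hcoef A k l = (row A k \<bullet> row A l) / (row A l \<bullet> row A l)"

definition chains :: "nat \<Rightarrow> nat \<Rightarrow> nat \<Rightarrow> nat list set" where
  "chains i j v = {ts. length ts = v \<and> sorted_wrt (<) ts \<and> ts ! 0 = i \<and> ts ! (v - 1) = j}"

definition dcoef :: "real mat \<Rightarrow> (nat \<Rightarrow> real) \<Rightarrow> nat \<Rightarrow> nat \<Rightarrow> real" where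
  "dcoef A u i j = (\<Sum>v = 2..j - i + 1. (-1) ^ (v - 1) *
     (\<Sum>ts \<in> chains i j v.
        (\<Prod>s < v - 1. u (ts ! (s + 1))) * (\<Prod>s < v - 1. hcoef A (ts ! s) (ts ! (s + 1)))))"

definition Omega :: "nat \<Rightarrow> real mat \<Rightarrow> (nat \<Rightarrow> real) \<Rightarrow> real mat" where
  "Omega m A u = mat m m (\<lambda>(i, j). if i = j then 1 else if i < j then dcoef A u i j else 0)"

definition Elem :: "nat \<Rightarrow> nat \<Rightarrow> nat \<Rightarrow> real \<Rightarrow> real mat" where
  "Elem m j i c = 1\<^sub>m m + c \<cdot>\<^sub>m mat m m (\<lambda>(r, s). unit_vec m j $ r * unit_vec m i $ s)"

definition mat_prod_list :: "nat \<Rightarrow> real mat list \<Rightarrow> real mat" where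
  "mat_prod_list m Ms = foldr (*) Ms (1\<^sub>m m)"

definition Hmat :: "nat \<Rightarrow> real mat \<Rightarrow> (nat \<Rightarrow> real) \<Rightarrow> nat \<Rightarrow> real mat" where
  "Hmat m A u i = (if i = 0 then 1\<^sub>m m
     else mat_prod_list m (map (\<lambda>j. Elem m j i (- u i * hcoef A j i)) [0..<i]))"

end

theory Submission
  imports Defs
begin

text \<open>Each \<open>H\<^sub>k\<close> is a product of elementary matrices acting on the same column \<open>k\<close>, so it
  is the identity with the entries \<open>F l k = -\<mu>\<^sub>k h\<^sub>l\<^sub>k\<close> (\<open>l < k\<close>) placed above the diagonal of
  column \<open>k\<close>. Right multiplication by \<open>H\<^sub>k\<close> leaves all other columns alone and replaces
  column \<open>k\<close> by \<open>e\<^sub>k\<close> plus the combination of columns \<open>l < k\<close> with weights \<open>F l k\<close>. So the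
  entries of \<open>H\<^sub>1 \<cdots> H\<^sub>m\<close> satisfy \<open>P i k = \<delta>\<^sub>i\<^sub>k + (\<Sum>l<k. P i l * F l k)\<close>, whose solution
  is the sum, over all increasing chains from \<open>i\<close> to \<open>k\<close>, of the products of \<open>F\<close> along
  consecutive links; pulling the signs out of \<open>F\<close> gives \<open>d\<^sub>i\<^sub>k\<close>.\<close>

lemma chains_elem_bounds:
  assumes "ts \<in> chains i j v" "x \<in> set ts"
  shows "i \<le> x" "x \<le> j"
proof -
  from assms obtain n where n: "n < v" "x = ts ! n"
    by (auto simp: chains_def in_set_conv_nth)
  have "sorted ts" "length ts = v" "ts ! 0 = i" "ts ! (v - 1) = j"
    using assms(1) by (auto simp: chains_def strict_sorted_imp_sorted)
  with n show "i \<le> x" "x \<le> j"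
    by (auto intro: sorted_nth_mono)
qed

lemma finite_chains: "finite (chains i j v)"
proof (rule finite_subset)
  show "chains i j v \<subseteq> {ts. set ts \<subseteq> {..j} \<and> length ts = v}"
  proof
    fix ts assume "ts \<in> chains i j v"
    with chains_elem_bounds(2)[OF this] show "ts \<in> {ts. set ts \<subseteq> {..j} \<and> length ts = v}"
      by (auto simp: chains_def)
  qed
qed (simp add: finite_lists_length_eq)

lemma mem_chains_length_le:
  assumes "ts \<in> chains i j v"
  shows "v \<le> j - i + 1"
proof -
  have "set ts \<subseteq> {i..j}"
    using assms by (auto dest: chains_elem_bounds)
  then have "card (set ts) \<le> j - i + 1"
    using card_mono[of "{i..j}" "set ts"] by simp
  moreover have "card (set ts) = v"
    using assms by (simp add: chains_def distinct_card strict_sorted_iff)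
  ultimately show ?thesis by simp
qed

lemma chains_Suc:
  assumes "0 < v"
  shows "chains i k (Suc v) = (\<lambda>(l, ts). ts @ [k]) ` (SIGMA l:{..<k}. chains i l v)"
proof (intro equalityI subsetI)
  fix xs assume xs: "xs \<in> chains i k (Suc v)"
  define ts where "ts = butlast xs"
  have "xs \<noteq> []" using xs by (auto simp: chains_def)
  then have snoc: "xs = ts @ [k]" and "length ts = v"
    using xs append_butlast_last_id[of xs] by (auto simp: ts_def chains_def last_conv_nth)
  then have "ts \<in> chains i (ts ! (v - 1)) v" "ts ! (v - 1) < k"
    using xs assms by (auto simp: chains_def sorted_wrt_append nth_append)
  with snoc show "xs \<in> (\<lambda>(l, ts). ts @ [k]) ` (SIGMA l:{..<k}. chains i l v)"
    by force
next
  fix xs assume "xs \<in> (\<lambda>(l, ts). ts @ [k]) ` (SIGMA l:{..<k}. chains i l v)"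
  then obtain l ts where xs: "xs = ts @ [k]" "l < k" "ts \<in> chains i l v"
    by auto
  then have "\<forall>x\<in>set ts. x < k"
    by (auto dest: chains_elem_bounds(2))
  with xs assms show "xs \<in> chains i k (Suc v)"
    by (auto simp: chains_def sorted_wrt_append nth_append)
qed

definition chain_weight :: "(nat \<Rightarrow> nat \<Rightarrow> 'a::comm_semiring_1) \<Rightarrow> nat list \<Rightarrow> 'a" where
  "chain_weight f ts = (\<Prod>s < length ts - 1. f (ts ! s) (ts ! (s + 1)))"

definition chain_sum :: "(nat \<Rightarrow> nat \<Rightarrow> 'a::comm_semiring_1) \<Rightarrow> nat \<Rightarrow> nat \<Rightarrow> nat \<Rightarrow> 'a" where
  "chain_sum f v i j = (\<Sum>ts \<in> chains i j v. chain_weight f ts)"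

definition path_sum :: "(nat \<Rightarrow> nat \<Rightarrow> 'a::comm_semiring_1) \<Rightarrow> nat \<Rightarrow> nat \<Rightarrow> 'a" where
  "path_sum f i j = (\<Sum>v = 1..j - i + 1. chain_sum f v i j)"

lemma chain_weight_snoc:
  assumes "ts \<noteq> []"
  shows "chain_weight f (ts @ [k]) = chain_weight f ts * f (last ts) k"
proof -
  obtain n where n: "length ts = Suc n"
    using assms by (cases ts) auto
  have "chain_weight f (ts @ [k]) = (\<Prod>s < Suc n. f ((ts @ [k]) ! s) ((ts @ [k]) ! (s + 1)))"
    using n by (simp add: chain_weight_def)
  also have "\<dots> = chain_weight f ts * f (ts ! n) k"
    using n by (simp add: chain_weight_def nth_append)
  finally show ?thesis
    using n assms by (simp add: last_conv_nth)
qed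

lemma chains_1: "chains i j 1 = (if i = j then {[i]} else {})"
  by (auto simp: chains_def length_Suc_conv)

lemma chain_sum_1: "chain_sum f 1 i j = (if i = j then 1 else 0)"
  unfolding chain_sum_def chains_1 by (simp add: chain_weight_def)

lemma chain_sum_eq_0: "j - i + 1 < v \<Longrightarrow> chain_sum f v i j = 0"
  by (auto simp: chain_sum_def dest: mem_chains_length_le intro!: sum.neutral)

lemma chain_sum_Suc:
  assumes "0 < v"
  shows "chain_sum f (Suc v) i k = (\<Sum>l < k. chain_sum f v i l * f l k)"
proof -
  have inj: "inj_on (\<lambda>(l, ts). ts @ [k]) (SIGMA l:{..<k}. chains i l v)"
    by (auto simp: inj_on_def chains_def)
  have "chain_sum f (Suc v) i k = (\<Sum>(l, ts) \<in> (SIGMA l:{..<k}. chains i l v). chain_weight f (ts @ [k]))"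
    unfolding chain_sum_def chains_Suc[OF assms] sum.reindex[OF inj] by (simp add: case_prod_unfold)
  also have "\<dots> = (\<Sum>l < k. \<Sum>ts \<in> chains i l v. chain_weight f ts * f l k)"
  proof (subst sum.Sigma[symmetric], simp_all add: finite_chains, intro sum.cong refl)
    fix l ts assume "ts \<in> chains i l v"
    then have "ts \<noteq> []" "last ts = l"
      using assms by (auto simp: chains_def last_conv_nth)
    then show "chain_weight f (ts @ [k]) = chain_weight f ts * f l k"
      by (simp add: chain_weight_snoc)
  qed
  finally show ?thesis
    by (simp add: chain_sum_def sum_distrib_right)
qed

lemma path_sum_eq_sum_chain_sum:
  assumes "j - i + 1 \<le> N"
  shows "path_sum f i j = (\<Sum>v = 1..N. chain_sum f v i j)"
  unfolding path_sum_def using assms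
  by (intro sum.mono_neutral_left) (auto simp: chain_sum_eq_0)

lemma path_sum_rec:
  "path_sum f i k = (if i = k then 1 else 0) + (\<Sum>l < k. path_sum f i l * f l k)"
proof -
  have "path_sum f i k = (\<Sum>v = 1..Suc k. chain_sum f v i k)"
    by (rule path_sum_eq_sum_chain_sum) simp
  also have "\<dots> = chain_sum f 1 i k + (\<Sum>v = Suc 1..Suc k. chain_sum f v i k)"
    by (rule sum.atLeast_Suc_atMost) simp
  also have "(\<Sum>v = Suc 1..Suc k. chain_sum f v i k) = (\<Sum>v = 1..k. \<Sum>l < k. chain_sum f v i l * f l k)"
    unfolding sum.shift_bounds_cl_Suc_ivl by (intro sum.cong refl) (simp add: chain_sum_Suc)
  also have "\<dots> = (\<Sum>l < k. path_sum f i l * f l k)"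
    by (subst sum.swap) (simp add: path_sum_eq_sum_chain_sum[of _ i k] sum_distrib_right)
  finally show ?thesis
    using chain_sum_1[of f i k] by simp
qed

definition col_transvection :: "nat \<Rightarrow> nat \<Rightarrow> (nat \<Rightarrow> 'a::comm_semiring_1) \<Rightarrow> 'a mat" where
  "col_transvection m k c = mat m m (\<lambda>(r, s). if r = s then 1 else if s = k then c r else 0)"

lemma index_mult_col_transvection:
  fixes M :: "'a::comm_semiring_1 mat"
  assumes "M \<in> carrier_mat m m" "i < m" "j < m"
  shows "(M * col_transvection m k c) $$ (i, j) =
    M $$ (i, j) + (if j = k then \<Sum>l \<in> {..<m} - {k}. M $$ (i, l) * c l else 0)"
proof -
  have "(M * col_transvection m k c) $$ (i, j) =
      (\<Sum>l < m. M $$ (i, l) * (if l = j then 1 else if j = k then c l else 0))"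
    using assms by (simp add: col_transvection_def scalar_prod_def lessThan_atLeast0)
  also have "\<dots> = (\<Sum>l < m. (if l = j then M $$ (i, j) else 0) +
      (if j = k then (if l \<in> {..<m} - {k} then M $$ (i, l) * c l else 0) else 0))"
    by (intro sum.cong refl) auto
  moreover have "{..<m} \<inter> {l. l \<noteq> k} = {..<m} - {k}"
    by blast
  ultimately show ?thesis
    using assms(3) by (cases "j = k") (simp_all add: sum.distrib sum.If_cases)
qed

lemma col_transvection_carrier [simp]: "col_transvection m k c \<in> carrier_mat m m"
  by (simp add: col_transvection_def)

lemma col_transvection_mult:
  "col_transvection m k c * col_transvection m k d = col_transvection m k (\<lambda>r. c r + d r)"
proof (rule eq_matI)
  fix i j assume "i < dim_row (col_transvection m k (\<lambda>r. c r + d r))"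
    "j < dim_col (col_transvection m k (\<lambda>r. c r + d r))"
  then have ij: "i < m" "j < m"
    by (simp_all add: col_transvection_def)
  have "(\<Sum>l \<in> {..<m} - {k}. col_transvection m k c $$ (i, l) * d l) = (if i = k then 0 else d i)"
    using ij by (simp add: col_transvection_def if_distrib[of "\<lambda>x. x * _"] sum.If_cases)
  with ij show "(col_transvection m k c * col_transvection m k d) $$ (i, j) =
      col_transvection m k (\<lambda>r. c r + d r) $$ (i, j)"
    by (simp add: index_mult_col_transvection) (simp add: col_transvection_def)
qed (simp_all add: col_transvection_def)

lemma mat_prod_list_carrier:
  "\<forall>M \<in> set Ms. M \<in> carrier_mat m m \<Longrightarrow> mat_prod_list m Ms \<in> carrier_mat m m"
  by (induction Ms) (auto simp: mat_prod_list_def)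

lemma mat_prod_list_snoc:
  assumes "\<forall>M \<in> set Ms. M \<in> carrier_mat m m" "N \<in> carrier_mat m m"
  shows "mat_prod_list m (Ms @ [N]) = mat_prod_list m Ms * N"
  using assms
proof (induction Ms)
  case Nil
  then show ?case by (simp add: mat_prod_list_def)
next
  case (Cons M Ms)
  then have "mat_prod_list m Ms \<in> carrier_mat m m"
    by (simp add: mat_prod_list_carrier)
  with Cons show ?case
    by (simp add: mat_prod_list_def assoc_mult_mat[of M m m _ m N m])
qed

lemma mat_prod_list_col_transvection:
  "mat_prod_list m (map (\<lambda>j. col_transvection m k (c j)) js) = col_transvection m k (\<lambda>r. \<Sum>j \<leftarrow> js. c j r)"
proof (induction js)
  case Nil
  show ?case
    by (auto simp: mat_prod_list_def col_transvection_def intro!: eq_matI)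
next
  case (Cons j js)
  then show ?case
    by (simp add: mat_prod_list_def col_transvection_mult)
qed

lemma Elem_eq_col_transvection:
  "j \<noteq> k \<Longrightarrow> Elem m j k c = col_transvection m k (\<lambda>r. if r = j then c else 0)"
  by (auto simp: Elem_def col_transvection_def unit_vec_def intro!: eq_matI)

lemma Hmat_eq_col_transvection:
  "Hmat m A u k = col_transvection m k (\<lambda>r. if r < k then - u k * hcoef A r k else 0)"
proof -
  have "Hmat m A u k = mat_prod_list m (map (\<lambda>j. Elem m j k (- u k * hcoef A j k)) [0..<k])"
    by (simp add: Hmat_def mat_prod_list_def)
  also have "\<dots> = mat_prod_list m
      (map (\<lambda>j. col_transvection m k (\<lambda>r. if r = j then - u k * hcoef A j k else 0)) [0..<k])"
    by (intro arg_cong[where f = "mat_prod_list m"] map_cong refl Elem_eq_col_transvection) simp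
  finally show ?thesis
    by (simp add: mat_prod_list_col_transvection interv_sum_list_conv_sum_set_nat)
qed

lemma mat_prod_list_col_transvections_eq_path_sum:
  fixes f :: "nat \<Rightarrow> nat \<Rightarrow> real"
  assumes "k \<le> m"
  shows "mat_prod_list m (map (\<lambda>l. col_transvection m l (\<lambda>r. if r < l then f r l else 0)) [0..<k]) =
    mat m m (\<lambda>(i, j). if j < k then path_sum f i j else if i = j then 1 else 0)"
  using assms
proof (induction k)
  case 0
  show ?case
    by (auto simp: mat_prod_list_def intro!: eq_matI)
next
  case (Suc k)
  define Q where "Q = mat m m (\<lambda>(i, j). if j < k then path_sum f i j else if i = j then 1 else 0)"
  let ?T = "\<lambda>l. col_transvection m l (\<lambda>r. if r < l then f r l else 0)"
  let ?P = "mat m m (\<lambda>(i, j). if j < Suc k then path_sum f i j else if i = j then 1 else 0)"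
  have "mat_prod_list m (map ?T [0..<Suc k]) = mat_prod_list m (map ?T [0..<k]) * ?T k"
    by (simp add: mat_prod_list_snoc)
  also have "\<dots> = Q * ?T k"
    using Suc by (simp add: Q_def)
  also have "\<dots> = ?P"
  proof (rule eq_matI)
    fix i j assume "i < dim_row ?P" "j < dim_col ?P"
    then have ij: "i < m" "j < m" by simp_all
    have "(\<Sum>l \<in> {..<m} - {k}. Q $$ (i, l) * (if l < k then f l k else 0)) = (\<Sum>l < k. path_sum f i l * f l k)"
      using Suc.prems ij by (intro sum.mono_neutral_cong_right) (auto simp: Q_def)
    with ij show "(Q * ?T k) $$ (i, j) = ?P $$ (i, j)"
      by (auto simp: index_mult_col_transvection Q_def path_sum_rec[of f i k])
  qed (simp_all add: Q_def col_transvection_def)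
  finally show ?case .
qed

lemma path_sum_lower: "j \<le> i \<Longrightarrow> path_sum f i j = (if i = j then 1 else 0)"
  using chain_sum_1[of f i j] by (simp add: path_sum_def)

lemma dcoef_eq_path_sum:
  assumes "i < j"
  shows "dcoef A u i j = path_sum (\<lambda>a b. - u b * hcoef A a b) i j"
proof -
  let ?f = "\<lambda>a b. - u b * hcoef A a b"
  have "{1..j - i + 1} = insert 1 {2..j - i + 1}"
    by auto
  then have "path_sum ?f i j = chain_sum ?f 1 i j + (\<Sum>v = 2..j - i + 1. chain_sum ?f v i j)"
    unfolding path_sum_def by simp
  also have "chain_sum ?f 1 i j = 0"
    using assms chain_sum_1[of ?f i j] by simp
  also have "(\<Sum>v = 2..j - i + 1. chain_sum ?f v i j) = dcoef A u i j"
    unfolding dcoef_def chain_sum_def sum_distrib_left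
  proof (intro sum.cong refl)
    fix v ts assume "ts \<in> chains i j v"
    then have "length ts = v"
      by (simp add: chains_def)
    then show "chain_weight ?f ts = (-1) ^ (v - 1) *
        ((\<Prod>s < v - 1. u (ts ! (s + 1))) * (\<Prod>s < v - 1. hcoef A (ts ! s) (ts ! (s + 1))))"
      by (simp add: chain_weight_def prod_uminus prod.distrib)
  qed
  finally show ?thesis by simp
qed

theorem theorem3p9:
  fixes A :: "real mat" and u :: "nat \<Rightarrow> real" and m n :: nat
  assumes "A \<in> carrier_mat m n"
    and "\<forall>k < m. row A k \<noteq> 0\<^sub>v n"
  shows "Omega m A u = mat_prod_list m (map (Hmat m A u) [0..<m])"
proof -
  let ?f = "\<lambda>a b. - u b * hcoef A a b"
  have "mat_prod_list m (map (Hmat m A u) [0..<m]) =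
      mat_prod_list m (map (\<lambda>l. col_transvection m l (\<lambda>r. if r < l then ?f r l else 0)) [0..<m])"
    by (intro arg_cong[where f = "mat_prod_list m"] map_cong refl Hmat_eq_col_transvection)
  also have "\<dots> = mat m m (\<lambda>(i, j). if j < m then path_sum ?f i j else if i = j then 1 else 0)"
    by (rule mat_prod_list_col_transvections_eq_path_sum) simp
  also have "\<dots> = Omega m A u"
    by (rule eq_matI) (auto simp: Omega_def dcoef_eq_path_sum path_sum_lower)
  finally show ?thesis by simp
qed

end
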